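(* Let $p$ be an odd prime, let $l\ge 3$ be an odd integer with $l\mid p-1$, and let $\omega$ be a primitive $l$-th root of unity in $\mathbb{F}_p$. Then the cyclic code $\mathcal{C}_1$ of length $lp$ over $\mathbb{F}_p$ generated by $g_1(x)=(x-1)^4(x-\omega)(x-\omega^2)$ is an AMDS symbol-pair code with minimum symbol-pair distance $7$.
   Context: For $\mathbf{x}=(x_0,\dots,x_{n-1})\in\mathbb{F}_p^n$, the symbol-pair distance is $D_p(\mathbf{x},\mathbf{y})=|\{i:(x_i,x_{i+1})\neq(y_i,y_{i+1})\}|$ (indices modulo $n$); the minimum symbol-pair distance $d_p$ is the minimum of $D_p$ over distinct codewords. A code $\mathcal{C}$ of length $n$ with minimum symbol-pair distance $d_p$ is an AMDS (almost MDS) symbol-pair code if $|\mathcal{C}|=p^{n-d_p+1}$. The cyclic code generated by $g(x)\mid x^n-1$ is the ideal $\langle g(x)\rangle$ in $\mathbb{F}_p[x]/\langle x^n-1\rangle$. *)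

theory Defs
  imports "HOL-Computational_Algebra.Polynomial"
begin

text \<open>A word of length n over a field is represented by a polynomial of degree < n;
  its i-th symbol is coeff c i (i < n). Indices are taken modulo n.\<close>

definition pair_dist :: "nat \<Rightarrow> 'a::zero poly \<Rightarrow> 'a poly \<Rightarrow> nat" where
  "pair_dist n x y = card {i. i < n \<and>
      (coeff x i, coeff x (Suc i mod n)) \<noteq> (coeff y i, coeff y (Suc i mod n))}"

text \<open>The cyclic code generated by g: the ideal <g> in F[x]/<x^n - 1>, each residue
  class represented by its remainder modulo x^n - 1.\<close>

definition cyclic_code :: "nat \<Rightarrow> 'a::field poly \<Rightarrow> 'a poly set" where
  "cyclic_code n g = {(a * g) mod (monom 1 n - 1) | a. True}"

definition min_pair_dist :: "nat \<Rightarrow> 'a::zero poly set \<Rightarrow> nat" where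
  "min_pair_dist n C = Min {pair_dist n x y | x y. x \<in> C \<and> y \<in> C \<and> x \<noteq> y}"

definition AMDS_pair_code :: "nat \<Rightarrow> 'a::{field,finite} poly set \<Rightarrow> nat \<Rightarrow> bool" where
  "AMDS_pair_code n (C :: 'a poly set) d \<longleftrightarrow>
     min_pair_dist n C = d \<and> card C = card (UNIV :: 'a set) ^ (n - d + 1)"

definition primitive_root_of_unity :: "nat \<Rightarrow> 'a::field \<Rightarrow> bool" where
  "primitive_root_of_unity l w \<longleftrightarrow>
     0 < l \<and> w ^ l = 1 \<and> (\<forall>k. 0 < k \<and> k < l \<longrightarrow> w ^ k \<noteq> 1)"

end

theory Submission
  imports "HOL-Number_Theory.Residues" Defs
begin

(* Let c = sum c_i x^i be a nonzero codeword of length n = l p with support S.  From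
   (x - 1)^4 | c, applying the Euler operator x d/dx, the power sums sum c_i i^k vanish in F_p
   for k <= 3, and c(omega) = c(omega^2) = 0.  Since i |-> (i mod p, omega^i) is injective on
   Z/n, a Vandermonde argument shows that if |S| <= 4 every residue class mod p meets S at least
   twice: this excludes |S| <= 3, and for |S| = 4 with two cyclically adjacent pairs s, s + 1
   and t, t + 1 it gives c_s + z c_(s+1) = 0 for z = omega and z = omega^2, hence
   c_(s+1) = 0.  If |S| = 5 with four adjacent pairs, S is a run of five consecutive positions;
   the power sums force binomial weights, and then c(omega) is a nonzero multiple of
   (omega - 1)^4.  As the pair weight equals 2|S| minus the number of adjacent pairs, it is
   at least 7.  The codeword (x^a - 1)(x^b - 1) with p | a, l | b and a + b = n - 1 attains 7,
   and the code has dimension n - deg g = n - 6. *)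

section \<open>Supports and pair weight\<close>

definition coeff_support :: "'a::zero poly \<Rightarrow> nat set" where
  "coeff_support c = {i. coeff c i \<noteq> 0}"

definition pair_support :: "nat \<Rightarrow> 'a::zero poly \<Rightarrow> nat set" where
  "pair_support n c = {i. i < n \<and> (coeff c i \<noteq> 0 \<or> coeff c (Suc i mod n) \<noteq> 0)}"

lemma pair_dist_eq_card_pair_support:
  "pair_dist n x y = card (pair_support n (x - y :: 'a::ab_group_add poly))"
  unfolding pair_dist_def pair_support_def by (simp add: coeff_diff)

lemma coeff_support_subset:
  "degree c < n \<Longrightarrow> coeff_support c \<subseteq> {..<n}"
  by (auto simp: coeff_support_def intro: le_less_trans[OF le_degree])

lemma inj_on_Suc_mod: "inj_on (\<lambda>i. Suc i mod n) {..<n}"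
proof (rule inj_onI)
  fix i j assume "i \<in> {..<n}" "j \<in> {..<n}" "Suc i mod n = Suc j mod n"
  then have "[i + 1 = j + 1] (mod n)"
    by (simp add: cong_def)
  then have "[i = j] (mod n)"
    by (simp only: cong_add_rcancel_nat)
  then show "i = j"
    using \<open>i \<in> {..<n}\<close> \<open>j \<in> {..<n}\<close> by (simp add: cong_less_modulus_unique_nat)
qed

lemma Suc_mod_image: "0 < n \<Longrightarrow> (\<lambda>i. Suc i mod n) ` {..<n} = {..<n}"
  by (rule endo_inj_surj) (auto simp: inj_on_Suc_mod)

text \<open>The pair weight of c is |S| + |S - 1| - |S \<inter> (S - 1)| where S is the support of c
  and S - 1 its cyclic shift; the intersection consists of the starts of adjacent pairs.\<close>

lemma card_pair_support:
  assumes "degree c < n"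
  shows "card (pair_support n c) =
    2 * card (coeff_support c) - card {i \<in> coeff_support c. Suc i mod n \<in> coeff_support c}"
proof -
  define S where "S = coeff_support c"
  define P where "P = {i \<in> {..<n}. Suc i mod n \<in> S}"
  have n: "0 < n"
    using assms by simp
  have S: "S \<subseteq> {..<n}" "finite S"
    using coeff_support_subset[OF assms] finite_subset by (auto simp: S_def)
  have "(\<lambda>i. Suc i mod n) ` P = S"
    using S(1) Suc_mod_image[OF n] by (auto simp: P_def)
  moreover have "inj_on (\<lambda>i. Suc i mod n) P"
    by (rule inj_on_subset[OF inj_on_Suc_mod]) (auto simp: P_def)
  ultimately have cP: "card P = card S"
    by (metis card_image)
  have "pair_support n c = S \<union> P"
    using S(1) by (auto simp: pair_support_def P_def S_def coeff_support_def)
  moreover have "S \<inter> P = {i \<in> S. Suc i mod n \<in> S}"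
    using S(1) by (auto simp: P_def)
  moreover have "card S + card P = card (S \<union> P) + card (S \<inter> P)"
    by (rule card_Un_Int) (auto simp: S(2) P_def)
  ultimately show ?thesis
    using cP by (simp add: S_def)
qed

lemma Suc_mod_closed_eq_lessThan:
  assumes "S \<subseteq> {..<n}" "s \<in> S" "\<forall>i\<in>S. Suc i mod n \<in> S"
  shows "S = {..<n}"
proof -
  have walk: "(s + j) mod n \<in> S" for j
  proof (induction j)
    case 0
    then show ?case
      using assms by auto
  next
    case (Suc j)
    then have "Suc ((s + j) mod n) mod n \<in> S"
      using assms(3) by blast
    then show ?case
      by (simp add: mod_Suc_eq)
  qed
  have "i \<in> S" if "i < n" for i
    using walk[of "i + n - s"] that assms by auto
  then show ?thesis
    using assms(1) by auto
qed

lemma Suc_mod_pred_mod: "i < n \<Longrightarrow> Suc ((i + n - 1) mod n) mod n = i"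
  by (simp add: mod_Suc_eq)

lemma pred_mod_Suc_mod: "i < n \<Longrightarrow> (Suc i mod n + n - 1) mod n = i"
  by (cases "Suc i = n") simp_all

lemma card_run_starts:
  assumes "S \<subseteq> {..<n}"
  shows "card {i \<in> S. (i + n - 1) mod n \<notin> S} = card S - card {i \<in> S. Suc i mod n \<in> S}"
proof -
  define E where "E = {i \<in> S. Suc i mod n \<in> S}"
  define A where "A = {i \<in> S. (i + n - 1) mod n \<notin> S}"
  have fin: "finite S"
    using assms finite_subset by blast
  have "(\<lambda>i. Suc i mod n) ` E = S - A"
  proof (intro equalityI subsetI)
    fix j assume "j \<in> (\<lambda>i. Suc i mod n) ` E"
    then obtain i where "i \<in> E" "j = Suc i mod n"
      by blast
    then show "j \<in> S - A"
      using assms pred_mod_Suc_mod[of i n] by (auto simp: E_def A_def)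
  next
    fix j assume "j \<in> S - A"
    then have "(j + n - 1) mod n \<in> E" "j = Suc ((j + n - 1) mod n) mod n"
      using assms Suc_mod_pred_mod by (auto simp: E_def A_def)
    then show "j \<in> (\<lambda>i. Suc i mod n) ` E"
      by blast
  qed
  moreover have "inj_on (\<lambda>i. Suc i mod n) E"
    by (rule inj_on_subset[OF inj_on_Suc_mod]) (use assms in \<open>auto simp: E_def\<close>)
  ultimately have "card E = card (S - A)"
    by (metis card_image)
  also have "\<dots> = card S - card A"
    using fin by (intro card_Diff_subset) (auto simp: A_def)
  finally show ?thesis
    using fin by (simp add: A_def E_def[symmetric] card_mono)
qed

lemma cyclic_walk_back_reaches:
  assumes S: "S \<subseteq> {..<n}" and "s \<in> S" "card S < n"
    and pred_in: "\<forall>i\<in>S. i \<noteq> y \<longrightarrow> (i + n - 1) mod n \<in> S"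
  shows "\<exists>j<card S. (s + n - j) mod n = y"
proof (rule ccontr)
  assume miss: "\<not> ?thesis"
  define b where "b j = (s + n - j) mod n" for j
  have b_in: "b j \<in> S" if "j \<le> card S" for j
    using that
  proof (induction j)
    case 0
    then show ?case
      using assms by (auto simp: b_def)
  next
    case (Suc j)
    then have "b j \<in> S" "b j \<noteq> y"
      using miss by (auto simp: b_def)
    then have "(b j + n - 1) mod n \<in> S"
      using pred_in by blast
    moreover have "b j + n - 1 = b j + (n - 1)"
      using assms(3) by simp
    then have "(b j + n - 1) mod n = (s + n - j + (n - 1)) mod n"
      by (simp add: b_def mod_add_left_eq)
    moreover have "s + n - j + (n - 1) = (s + n - Suc j) + n"
      using Suc.prems assms(3) by simp
    ultimately show ?case
      by (simp add: b_def)
  qed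
  have "inj_on b {..card S}"
  proof (rule inj_onI)
    fix i j assume ij: "i \<in> {..card S}" "j \<in> {..card S}" "b i = b j"
    then have "[s + n - i = s + n - j] (mod n)"
      by (simp add: b_def cong_def)
    then have "[s + n - i + (i + j) = s + n - j + (i + j)] (mod n)"
      by (simp only: cong_add_rcancel_nat)
    then have "[j + (s + n) = i + (s + n)] (mod n)"
      using ij assms(3) by (simp add: add.commute add.left_commute)
    then have "[j = i] (mod n)"
      by (simp only: cong_add_rcancel_nat)
    then show "i = j"
      using ij assms(3) by (simp add: cong_def)
  qed
  then have "card (b ` {..card S}) = Suc (card S)"
    by (simp add: card_image)
  moreover have "b ` {..card S} \<subseteq> S"
    using b_in by auto
  ultimately have "Suc (card S) \<le> card S"
    using card_mono[OF finite_subset[OF S finite_lessThan]] by metis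
  then show False
    by simp
qed

text \<open>Exactly one element of S has its cyclic predecessor outside S, and walking back from any
  element of S reaches it in fewer than card S steps.\<close>

lemma cyclic_run_if_adjacent_pairs:
  assumes S: "S \<subseteq> {..<n}" and card_less: "card S < n"
    and adjacent: "card S \<le> Suc (card {i \<in> S. Suc i mod n \<in> S})"
  obtains y where "S = (\<lambda>j. (y + j) mod n) ` {..<card S}"
proof (cases "S = {}")
  case True
  then show ?thesis
    using that[of 0] by simp
next
  case False
  define A where "A = {i \<in> S. (i + n - 1) mod n \<notin> S}"
  have fin: "finite S"
    using S finite_subset by blast
  have "A \<noteq> {}"
  proof
    assume "A = {}"
    then have "card S - card {i \<in> S. Suc i mod n \<in> S} = 0"
      using card_run_starts[OF S] unfolding A_def by (metis card.empty)
    then have "card S \<le> card {i \<in> S. Suc i mod n \<in> S}"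
      by simp
    then have "{i \<in> S. Suc i mod n \<in> S} = S"
      using fin by (intro card_subset_eq) (auto intro: le_antisym card_mono)
    then have "S = {..<n}"
      using Suc_mod_closed_eq_lessThan[OF S] False by blast
    then show False
      using card_less by simp
  qed
  moreover have "card A \<le> 1"
    using card_run_starts[OF S] adjacent by (simp add: A_def)
  moreover have "finite A"
    using fin by (simp add: A_def)
  ultimately have "card A = 1"
    by (simp add: le_antisym Suc_leI card_gt_0_iff)
  then obtain y where A: "A = {y}"
    by (rule card_1_singletonE)
  have "S \<subseteq> (\<lambda>j. (y + j) mod n) ` {..<card S}"
  proof
    fix s assume s: "s \<in> S"
    have "\<forall>i\<in>S. i \<noteq> y \<longrightarrow> (i + n - 1) mod n \<in> S"
      using A by (auto simp: A_def)
    then obtain j where j: "j < card S" "(s + n - j) mod n = y"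
      using cyclic_walk_back_reaches[OF S s card_less] by blast
    have "(y + j) mod n = (s + n - j + j) mod n"
      unfolding j(2)[symmetric] by (rule mod_add_left_eq)
    also have "\<dots> = s"
      using j card_less s S by auto
    finally show "s \<in> (\<lambda>j. (y + j) mod n) ` {..<card S}"
      using j by force
  qed
  moreover have "card ((\<lambda>j. (y + j) mod n) ` {..<card S}) \<le> card S"
    by (metis card_image_le card_lessThan finite_lessThan)
  ultimately show ?thesis
    using that by (metis card_seteq finite_imageI finite_lessThan)
qed

section \<open>Power sums of coefficients\<close>

lemma poly_eq_sum_lessThan:
  fixes q :: "'a::comm_semiring_1 poly"
  assumes "degree q < n"
  shows "poly q x = (\<Sum>i<n. coeff q i * x ^ i)"
proof -
  have "poly q x = (\<Sum>i\<le>degree q. coeff q i * x ^ i)"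
    by (rule poly_altdef)
  also have "\<dots> = (\<Sum>i<n. coeff q i * x ^ i)"
    by (rule sum.mono_neutral_left) (use assms in \<open>auto simp: coeff_eq_0\<close>)
  finally show ?thesis .
qed

lemma sum_lessThan_eq_sum_coeff_support:
  fixes c :: "'a::semiring_0 poly"
  assumes "degree c < n"
  shows "(\<Sum>i<n. coeff c i * f i) = (\<Sum>i\<in>coeff_support c. coeff c i * f i)"
  by (rule sum.mono_neutral_right)
    (use coeff_support_subset[OF assms] in \<open>auto simp: coeff_support_def\<close>)

definition euler_deriv :: "'a::idom poly \<Rightarrow> 'a poly" where
  "euler_deriv q = [:0, 1:] * pderiv q"

lemma coeff_euler_deriv_iterate: "coeff ((euler_deriv ^^ k) q) i = of_nat i ^ k * coeff q i"
proof (induction k)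
  case (Suc k)
  then show ?case
    by (cases i) (simp_all add: euler_deriv_def coeff_pderiv)
qed simp

lemma degree_euler_deriv_iterate: "degree ((euler_deriv ^^ k) q) \<le> degree q"
  by (rule degree_le) (simp add: coeff_euler_deriv_iterate coeff_eq_0)

lemma euler_deriv_dvd:
  assumes "[:-1, 1:] ^ Suc m dvd q"
  shows "[:-1, 1:] ^ m dvd euler_deriv q"
proof -
  obtain h where h: "q = [:-1, 1:] ^ Suc m * h"
    using assms by blast
  have "pderiv q = [:-1, 1:] ^ m * (smult (of_nat (Suc m)) h + [:-1, 1:] * pderiv h)"
    unfolding h pderiv_mult pderiv_power_Suc by (simp add: pderiv_pCons algebra_simps)
  then show ?thesis
    unfolding euler_deriv_def by (metis dvd_mult dvd_triv_left)
qed

lemma euler_deriv_iterate_dvd: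
  "[:-1, 1:] ^ (m + k) dvd q \<Longrightarrow> [:-1, 1:] ^ m dvd (euler_deriv ^^ k) q"
proof (induction k arbitrary: q)
  case (Suc k)
  then have "[:-1, 1:] ^ m dvd (euler_deriv ^^ k) (euler_deriv q)"
    using euler_deriv_dvd[of "m + k" q] by simp
  then show ?case
    by (simp add: funpow_Suc_right del: funpow.simps)
qed simp

text \<open>(x d/dx)^k d still vanishes at 1, and its value there is the k-th power sum.\<close>

lemma power_moment_eq_0:
  fixes d :: "'a::idom poly"
  assumes "[:-1, 1:] ^ Suc k dvd d" "degree d < n"
  shows "(\<Sum>i<n. coeff d i * of_nat i ^ k) = 0"
proof -
  have "[:-1, 1:] ^ 1 dvd (euler_deriv ^^ k) d"
    using assms(1) by (intro euler_deriv_iterate_dvd) simp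
  then have "poly ((euler_deriv ^^ k) d) 1 = 0"
    by (simp add: poly_eq_0_iff_dvd)
  moreover have "degree ((euler_deriv ^^ k) d) < n"
    using degree_euler_deriv_iterate[of k d] assms(2) by linarith
  ultimately show ?thesis
    by (simp add: poly_eq_sum_lessThan coeff_euler_deriv_iterate mult.commute)
qed

lemma sum_mult_poly_eq_0_if_power_sums_eq_0:
  fixes w \<phi> :: "'b \<Rightarrow> 'a::comm_ring_1"
  assumes "\<forall>k\<le>m. (\<Sum>i\<in>S. w i * \<phi> i ^ k) = 0" "degree Q \<le> m"
  shows "(\<Sum>i\<in>S. w i * poly Q (\<phi> i)) = 0"
proof -
  have "poly Q x = (\<Sum>k<Suc m. coeff Q k * x ^ k)" for x
    using assms(2) by (intro poly_eq_sum_lessThan) simp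
  then have "(\<Sum>i\<in>S. w i * poly Q (\<phi> i)) = (\<Sum>i\<in>S. \<Sum>k<Suc m. coeff Q k * (w i * \<phi> i ^ k))"
    by (simp add: sum_distrib_left algebra_simps)
  also have "\<dots> = (\<Sum>k<Suc m. coeff Q k * (\<Sum>i\<in>S. w i * \<phi> i ^ k))"
    by (subst sum.swap) (simp add: sum_distrib_left)
  also have "\<dots> = 0"
    using assms(1) by simp
  finally show ?thesis .
qed

text \<open>Vandermonde argument: weighting with the polynomial vanishing on all other values of
  \<phi> isolates a single fibre.\<close>

lemma sum_fibre_eq_0_if_power_sums_eq_0:
  fixes w \<phi> :: "'b \<Rightarrow> 'a::idom"
  assumes "finite S" "\<forall>k\<le>m. (\<Sum>i\<in>S. w i * \<phi> i ^ k) = 0" "card (\<phi> ` S) \<le> Suc m"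
  shows "(\<Sum>i\<in>{i\<in>S. \<phi> i = r}. w i) = 0"
proof (cases "r \<in> \<phi> ` S")
  case False
  then have "{i\<in>S. \<phi> i = r} = {}"
    by auto
  then show ?thesis
    by (simp only: sum.empty)
next
  case True
  define Q where "Q = (\<Prod>s\<in>\<phi> ` S - {r}. [:-s, 1:])"
  have "degree Q = card (\<phi> ` S - {r})"
    unfolding Q_def by (subst degree_prod_eq_sum_degree) auto
  also have "\<dots> \<le> m"
    using assms(1,3) True by (simp add: card_Diff_singleton)
  finally have "(\<Sum>i\<in>S. w i * poly Q (\<phi> i)) = 0"
    by (rule sum_mult_poly_eq_0_if_power_sums_eq_0[OF assms(2)])
  moreover have "(\<Sum>i\<in>S. w i * poly Q (\<phi> i)) = (\<Sum>i\<in>{i\<in>S. \<phi> i = r}. w i) * poly Q r"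
  proof -
    have "(\<Sum>i\<in>S. w i * poly Q (\<phi> i)) = (\<Sum>i\<in>{i\<in>S. \<phi> i = r}. w i * poly Q (\<phi> i))"
      by (rule sum.mono_neutral_right) (use assms(1) in \<open>auto simp: Q_def poly_prod\<close>)
    then show ?thesis
      by (simp add: sum_distrib_right)
  qed
  moreover have "poly Q r \<noteq> 0"
    using assms(1) by (simp add: Q_def poly_prod)
  ultimately show ?thesis
    by simp
qed

lemma fibre_not_singleton_if_power_sums_eq_0:
  fixes w \<phi> :: "'b \<Rightarrow> 'a::idom"
  assumes "finite S" "\<forall>k\<le>m. (\<Sum>i\<in>S. w i * \<phi> i ^ k) = 0" "card (\<phi> ` S) \<le> Suc m"
    and "\<forall>i\<in>S. w i \<noteq> 0" "i \<in> S"
  shows "\<exists>j\<in>S. j \<noteq> i \<and> \<phi> j = \<phi> i"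
proof (rule ccontr)
  assume "\<not> ?thesis"
  then have "{j\<in>S. \<phi> j = \<phi> i} = {i}"
    using assms(5) by auto
  then show False
    using sum_fibre_eq_0_if_power_sums_eq_0[OF assms(1-3), of "\<phi> i"] assms(4,5) by simp
qed

text \<open>Testing against the cubics that vanish at three of the five points gives
  a j = (-1)^j (4 choose j) a 0.\<close>

lemma sum_five_consecutive_weights:
  fixes a :: "nat \<Rightarrow> 'a::field" and Y z :: 'a
  assumes "(2::'a) \<noteq> 0" "(3::'a) \<noteq> 0"
    and moments: "\<forall>k\<le>3. (\<Sum>j<5. a j * (Y + of_nat j) ^ k) = 0"
  shows "(\<Sum>j<5. a j * z ^ j) = a 0 * (z - 1) ^ 4"
proof -
  have sum5: "(\<Sum>j<5. f j) = f 0 + f 1 + f 2 + f 3 + (f 4 :: 'a)" for f :: "nat \<Rightarrow> 'a"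
    by (simp add: eval_nat_numeral)
  define Q where "Q u v w = [:-(Y + u), 1:] * [:-(Y + v), 1:] * [:-(Y + w), 1:]" for u v w
  have "degree (Q u v w) \<le> 3" for u v w
    unfolding Q_def by (rule order.trans[OF degree_mult_le])
      (use degree_mult_le[of "[:-(Y + u), 1:]" "[:-(Y + v), 1:]"] in auto)
  then have vanish: "(\<Sum>j<5. a j * ((of_nat j - u) * (of_nat j - v) * (of_nat j - w))) = 0"
    for u v w
    using sum_mult_poly_eq_0_if_power_sums_eq_0[OF moments, of "Q u v w"]
    by (simp add: Q_def algebra_simps)
  have six: "(6::'a) \<noteq> 0"
    using assms(1,2) by (metis mult_eq_0_iff num_double numeral_times_numeral)
  have "6 * (a 4 - a 0) = 0"
    using vanish[of 1 2 3] unfolding sum5 by (simp add: algebra_simps)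
  then have "a 4 - a 0 = 0"
    using six mult_eq_0_iff by blast
  then have a4: "a 4 = a 0"
    by simp
  have "6 * (a 1 + 4 * a 0) = 0"
    using vanish[of 2 3 4] unfolding sum5
    by (simp add: algebra_simps) (simp add: neg_eq_iff_add_eq_0)
  then have "a 1 + 4 * a 0 = 0"
    using six mult_eq_0_iff by blast
  then have a1: "a 1 = - 4 * a 0"
    by (simp add: eq_neg_iff_add_eq_0)
  have "2 * (a 2 - 6 * a 0) = 0"
    using vanish[of 1 3 4] unfolding sum5 by (simp add: algebra_simps)
  then have "a 2 - 6 * a 0 = 0"
    using assms(1) mult_eq_0_iff by blast
  then have a2: "a 2 = 6 * a 0"
    by simp
  have "2 * (a 3 + 4 * a 0) = 0"
    using vanish[of 1 2 4] unfolding sum5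
    by (simp add: algebra_simps) (simp add: neg_eq_iff_add_eq_0)
  then have "a 3 + 4 * a 0 = 0"
    using assms(1) mult_eq_0_iff by blast
  then have a3: "a 3 = - 4 * a 0"
    by (simp add: eq_neg_iff_add_eq_0)
  show ?thesis
    unfolding sum5 a1 a2 a3 a4
    by (simp add: algebra_simps power4_eq_xxxx power3_eq_cube power2_eq_square)
qed

lemma linear_mult_linear_dvd:
  fixes q :: "'a::field poly"
  assumes "poly q u = 0" "poly q v = 0" "u \<noteq> v"
  shows "[:-u, 1:] * [:-v, 1:] dvd q"
proof -
  obtain h where h: "q = [:-u, 1:] * h"
    using assms(1) poly_eq_0_iff_dvd by blast
  then have "poly h v = 0"
    using assms(2,3) by simp
  then obtain h' where "h = [:-v, 1:] * h'"
    using poly_eq_0_iff_dvd by blast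
  then have "q = ([:-u, 1:] * [:-v, 1:]) * h'"
    using h by (simp only: mult.assoc)
  then show ?thesis
    by (rule dvdI)
qed

lemma linear_power_mult_dvd:
  fixes q :: "'a::field poly"
  assumes "[:-1, 1:] ^ k dvd q" "poly q u = 0" "poly q v = 0" "u \<noteq> 1" "v \<noteq> 1" "u \<noteq> v"
  shows "[:-1, 1:] ^ k * [:-u, 1:] * [:-v, 1:] dvd q"
proof -
  obtain h where h: "q = [:-1, 1:] ^ k * h"
    using assms(1) by blast
  have "poly h u = 0" "poly h v = 0"
    using assms(2-5) h by simp_all
  then have "[:-u, 1:] * [:-v, 1:] dvd h"
    using assms(6) by (rule linear_mult_linear_dvd)
  then show ?thesis
    unfolding h mult.assoc by (rule mult_dvd_mono[OF dvd_refl])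
qed

lemma linear_power_CHAR_dvd_monom_minus_1:
  assumes "prime CHAR('a::comm_ring_1)" "CHAR('a) dvd m"
  shows "[:-1, 1:] ^ CHAR('a) dvd (monom 1 m - 1 :: 'a poly)"
proof -
  let ?p = "CHAR('a)"
  obtain k where m: "m = ?p * k"
    using assms(2) by blast
  have "(-1 :: 'a poly) ^ ?p = -1"
  proof (cases "even ?p")
    case True
    then have "\<not> 2 < ?p"
      using prime_odd_nat[OF assms(1)] by blast
    then have "?p = 2"
      using prime_ge_2_nat[OF assms(1)] by linarith
    then show ?thesis
      using uminus_CHAR_2[of "1 :: 'a poly"] by simp
  next
    case False
    then show ?thesis
      by simp
  qed
  moreover have "(monom 1 k + (-1) :: 'a poly) ^ ?p = monom 1 k ^ ?p + (-1) ^ ?p"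
    using assms(1) by (intro freshmans_dream) simp_all
  ultimately have "monom 1 m - 1 = (monom 1 k - 1 :: 'a poly) ^ ?p"
    by (simp add: m monom_power mult.commute)
  moreover have "[:-1, 1:] dvd (monom 1 k - 1 :: 'a poly)"
    by (simp add: poly_eq_0_iff_dvd[symmetric] poly_monom)
  ultimately show ?thesis
    by (simp add: dvd_power_same)
qed

lemma power_mod_eq: "(z::'a::monoid_mult) ^ n = 1 \<Longrightarrow> z ^ (i mod n) = z ^ i"
  by (metis div_mult_mod_eq power_add power_mult power_one mult.commute mult_1)

lemma of_nat_mod_eq: "of_nat n = (0::'a::semiring_1) \<Longrightarrow> of_nat (i mod n) = (of_nat i :: 'a)"
  by (metis add_0 div_mult_mod_eq mult_zero_right of_nat_add of_nat_mult)

lemma CHAR_eq_prime_card: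
  assumes "prime (card (UNIV :: 'a::{field,finite} set))"
  shows "CHAR('a) = card (UNIV :: 'a set)"
proof -
  have "CHAR('a) dvd card (UNIV :: 'a set)"
    by (rule CHAR_dvd_CARD)
  then show ?thesis
    using assms CHAR_not_1 by (auto simp: prime_nat_iff)
qed

lemma primitive_root_of_unity_power_eq_iff:
  assumes "primitive_root_of_unity l w"
  shows "w ^ i = w ^ j \<longleftrightarrow> [i = j] (mod l)"
proof -
  have l: "0 < l" "w ^ l = 1" and minimal: "\<And>k. 0 < k \<Longrightarrow> k < l \<Longrightarrow> w ^ k \<noteq> 1"
    using assms by (auto simp: primitive_root_of_unity_def)
  then have "w \<noteq> 0"
    by (metis power_0_left zero_neq_one neq0_conv)
  have same: "a = b" if "a \<le> b" "b < l" "w ^ a = w ^ b" for a b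
  proof -
    have "w ^ a * w ^ (b - a) = w ^ b"
      using that(1) by (simp flip: power_add)
    also have "\<dots> = w ^ a * 1"
      using that(3) by simp
    finally have "w ^ (b - a) = 1"
      using \<open>w \<noteq> 0\<close> by simp
    then show ?thesis
      using minimal[of "b - a"] that by linarith
  qed
  have "w ^ i = w ^ j \<longleftrightarrow> w ^ (i mod l) = w ^ (j mod l)"
    using power_mod_eq[OF l(2)] by simp
  also have "\<dots> \<longleftrightarrow> i mod l = j mod l"
  proof
    assume eq: "w ^ (i mod l) = w ^ (j mod l)"
    show "i mod l = j mod l"
    proof (cases "i mod l \<le> j mod l")
      case True
      show ?thesis
        using same[OF True mod_less_divisor[OF l(1)] eq] .
    next
      case False
      then show ?thesis
        using same[of "j mod l" "i mod l"] mod_less_divisor[OF l(1)] eq by simp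
    qed
  qed simp
  finally show ?thesis
    by (simp add: cong_def)
qed

lemma primitive_root_of_unity_power:
  assumes "primitive_root_of_unity l w" "coprime k l"
  shows "primitive_root_of_unity l (w ^ k)"
  unfolding primitive_root_of_unity_def
proof (intro conjI allI impI)
  show "0 < l" "(w ^ k) ^ l = 1"
    using assms(1) by (auto simp: primitive_root_of_unity_def simp flip: power_mult)
      (metis mult.commute power_mult power_one)
  fix j assume j: "0 < j \<and> j < l"
  show "(w ^ k) ^ j \<noteq> 1"
  proof
    assume "(w ^ k) ^ j = 1"
    then have "w ^ (k * j) = w ^ 0"
      by (simp add: power_mult)
    then have "[k * j = 0] (mod l)"
      using primitive_root_of_unity_power_eq_iff[OF assms(1), of "k * j" 0] by simp
    then have "l dvd k * j"
      by (simp add: cong_0_iff)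
    then have "l dvd j"
      using assms(2) by (simp add: coprime_commute coprime_dvd_mult_right_iff)
    then show False
      using j by (auto dest: dvd_imp_le)
  qed
qed

lemma inj_on_of_nat_power:
  fixes \<zeta> :: "'a::field"
  assumes "CHAR('a) = p" "primitive_root_of_unity l \<zeta>" "coprime l p"
  shows "inj_on (\<lambda>i. (of_nat i :: 'a, \<zeta> ^ i)) {..<l * p}"
proof (rule inj_onI)
  fix i j assume ij: "i \<in> {..<l * p}" "j \<in> {..<l * p}"
    and "(of_nat i :: 'a, \<zeta> ^ i) = (of_nat j, \<zeta> ^ j)"
  then have "[i = j] (mod p)" "[i = j] (mod l)"
    using assms(1) of_nat_eq_iff_cong_CHAR[where 'a='a] primitive_root_of_unity_power_eq_iff[OF assms(2)]
    by auto
  then have "[i = j] (mod l * p)"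
    using assms(3) by (simp add: coprime_cong_mult_nat)
  then show "i = j"
    using ij by (simp add: cong_less_modulus_unique_nat)
qed

section \<open>The lower bound on the pair weight\<close>

text \<open>The abstract setting of the lower bound: n vanishes in the field, \<omega> is an n-th root of
  unity, and a residue mod n is determined by its image in the field together with the
  corresponding power of \<omega> or of \<omega>^2 (for n = l p this is the Chinese remainder theorem).\<close>

locale separating_root_of_unity =
  fixes n :: nat and \<omega> :: "'a::field"
  assumes n_ge_7: "7 \<le> n"
    and of_nat_n: "of_nat n = (0::'a)"
    and two_neq_0: "(2::'a) \<noteq> 0" and three_neq_0: "(3::'a) \<noteq> 0"
    and omega_pow_n: "\<omega> ^ n = 1"
    and omega_square_neq_1: "\<omega> ^ 2 \<noteq> 1"
    and inj_on_residues: "k \<in> {1, 2} \<Longrightarrow> inj_on (\<lambda>i. (of_nat i :: 'a, (\<omega> ^ k) ^ i)) {..<n}"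
begin

lemma omega_neq_0: "\<omega> \<noteq> 0"
  using omega_pow_n n_ge_7 by (metis not_numeral_le_zero power_0_left zero_neq_one)

lemma omega_neq_1: "\<omega> \<noteq> 1"
  using omega_square_neq_1 by auto

lemma omega_neq_omega_square: "\<omega> \<noteq> \<omega> ^ 2"
  using omega_neq_0 omega_neq_1 by (simp add: power2_eq_square)

lemma of_nat_Suc_mod: "of_nat (Suc i mod n) = of_nat i + (1::'a)"
  using of_nat_mod_eq[OF of_nat_n, of "Suc i"] by simp

lemma omega_power_pow_n: "(\<omega> ^ k) ^ n = 1"
  by (metis omega_pow_n power_mult power_one mult.commute)

lemma omega_power_Suc_mod: "(\<omega> ^ k) ^ (Suc i mod n) = \<omega> ^ k * (\<omega> ^ k) ^ i"
  using power_mod_eq[OF omega_power_pow_n, of k "Suc i"] by simp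

definition generator :: "'a poly" where
  "generator = [:-1, 1:] ^ 4 * [:-\<omega>, 1:] * [:-(\<omega> ^ 2), 1:]"

lemma degree_generator: "degree generator = 6"
  by (simp add: generator_def degree_mult_eq degree_linear_power del: mult_pCons_left mult_pCons_right)

lemma generator_dvd_iff:
  "generator dvd d \<longleftrightarrow> [:-1, 1:] ^ 4 dvd d \<and> poly d \<omega> = 0 \<and> poly d (\<omega> ^ 2) = 0"
proof
  assume "generator dvd d"
  moreover have "[:-1, 1:] ^ 4 dvd generator" "[:-\<omega>, 1:] dvd generator"
    "[:-(\<omega> ^ 2), 1:] dvd generator"
    unfolding generator_def by (rule dvd_mult2 dvd_triv_left dvd_triv_right)+
  ultimately show "[:-1, 1:] ^ 4 dvd d \<and> poly d \<omega> = 0 \<and> poly d (\<omega> ^ 2) = 0"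
    by (auto simp: poly_eq_0_iff_dvd intro: dvd_trans)
next
  assume "[:-1, 1:] ^ 4 dvd d \<and> poly d \<omega> = 0 \<and> poly d (\<omega> ^ 2) = 0"
  then show "generator dvd d"
    unfolding generator_def
    using omega_neq_1 omega_square_neq_1 omega_neq_omega_square
    by (intro linear_power_mult_dvd) auto
qed

lemma generator_dvd_monom_minus_1:
  assumes "prime CHAR('a)" "4 \<le> CHAR('a)" "CHAR('a) dvd n"
  shows "generator dvd monom 1 n - 1"
proof -
  have "[:-1, 1:] ^ 4 dvd ([:-1, 1:] ^ CHAR('a) :: 'a poly)"
    using assms(2) by (rule le_imp_power_dvd)
  also have "\<dots> dvd monom 1 n - 1"
    using assms(1,3) by (rule linear_power_CHAR_dvd_monom_minus_1)
  finally show ?thesis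
    using omega_power_pow_n[of 1] omega_power_pow_n[of 2] by (simp add: generator_dvd_iff poly_monom)
qed

end

text \<open>Coefficients c and support S of a nonzero codeword: the power sums encode the factor
  (x - 1)^4 of the generator, the root sums its roots \<omega> and \<omega>^2.\<close>

locale vanishing_weights = separating_root_of_unity n \<omega> for n and \<omega> :: "'a::field" +
  fixes c :: "nat \<Rightarrow> 'a" and S :: "nat set"
  assumes S_subset: "S \<subseteq> {..<n}"
    and weights_nonzero: "i \<in> S \<Longrightarrow> c i \<noteq> 0"
    and moments_eq_0: "k \<le> 3 \<Longrightarrow> (\<Sum>i\<in>S. c i * of_nat i ^ k) = 0"
    and root_sums_eq_0: "k \<in> {1, 2} \<Longrightarrow> (\<Sum>i\<in>S. c i * (\<omega> ^ k) ^ i) = 0"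
begin

lemma finite_S: "finite S"
  using S_subset finite_subset by blast

lemma partner_if_card_le_4:
  assumes "card S \<le> 4" "i \<in> S"
  shows "\<exists>j\<in>S. j \<noteq> i \<and> of_nat j = (of_nat i :: 'a)"
proof (rule fibre_not_singleton_if_power_sums_eq_0[where m = 3 and w = c])
  show "card ((of_nat :: nat \<Rightarrow> 'a) ` S) \<le> Suc 3"
    using card_image_le[OF finite_S, of "of_nat :: nat \<Rightarrow> 'a"] assms(1) by simp
qed (use finite_S moments_eq_0 weights_nonzero assms(2) in auto)

lemma card_ge_4:
  assumes "S \<noteq> {}"
  shows "4 \<le> card S"
proof (rule ccontr)
  assume "\<not> 4 \<le> card S"
  then have small: "card S \<le> 3"
    by simp
  have same_residue: "of_nat i = (of_nat j :: 'a)" if ij: "i \<in> S" "j \<in> S" for i j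
  proof (rule ccontr)
    assume ne: "of_nat i \<noteq> (of_nat j :: 'a)"
    obtain i' where i': "i' \<in> S" "i' \<noteq> i" "of_nat i' = (of_nat i :: 'a)"
      using partner_if_card_le_4[OF _ ij(1)] small by auto
    obtain j' where j': "j' \<in> S" "j' \<noteq> j" "of_nat j' = (of_nat j :: 'a)"
      using partner_if_card_le_4[OF _ ij(2)] small by auto
    have "i \<noteq> j" "i \<noteq> j'" "i' \<noteq> j" "i' \<noteq> j'"
      using ne i' j' by metis+
    then have "card {i, i', j, j'} = 4"
      using i' j' by simp
    moreover have "{i, i', j, j'} \<subseteq> S"
      using ij i' j' by auto
    ultimately have "4 \<le> card S"
      using card_mono[OF finite_S] by metis
    then show False
      using small by simp
  qed
  have inj: "inj_on (\<lambda>i. \<omega> ^ i) S"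
  proof (rule inj_onI)
    fix i j assume "i \<in> S" "j \<in> S" "\<omega> ^ i = \<omega> ^ j"
    then show "i = j"
      using inj_on_residues[of 1] same_residue S_subset by (auto dest: inj_onD)
  qed
  have power_sums: "\<forall>k\<le>2. (\<Sum>i\<in>S. c i * (\<omega> ^ i) ^ k) = 0"
  proof (intro allI impI)
    fix k :: nat assume "k \<le> 2"
    then consider "k = 0" | "k \<in> {1, 2}"
      by fastforce
    moreover have "(\<omega> ^ i) ^ k = (\<omega> ^ k) ^ i" for i
      by (simp flip: power_mult add: mult.commute)
    ultimately show "(\<Sum>i\<in>S. c i * (\<omega> ^ i) ^ k) = 0"
      using moments_eq_0[of 0] root_sums_eq_0[of k] by cases simp_all
  qed
  obtain i where i: "i \<in> S"
    using assms by blast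
  have "card ((\<lambda>i. \<omega> ^ i) ` S) \<le> Suc 2"
    using card_image[OF inj] small by simp
  then obtain j where "j \<in> S" "j \<noteq> i" "\<omega> ^ j = \<omega> ^ i"
    using fibre_not_singleton_if_power_sums_eq_0[OF finite_S power_sums] weights_nonzero i
    by blast
  then show False
    using inj i by (auto dest: inj_onD)
qed

lemma not_run_of_5: "S \<noteq> (\<lambda>j. (y + j) mod n) ` {..<5}"
proof
  define e where "e j = (y + j) mod n" for j
  assume "S = (\<lambda>j. (y + j) mod n) ` {..<5}"
  then have S_eq: "S = e ` {..<5}"
    by (simp add: e_def)
  have "inj_on e {..<5}"
  proof (rule inj_onI)
    fix i j assume ij: "i \<in> {..<5::nat}" "j \<in> {..<5::nat}" "e i = e j"
    then have "[y + i = y + j] (mod n)"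
      by (simp add: e_def cong_def)
    then have "[i = j] (mod n)"
      by (simp only: cong_add_lcancel_nat)
    then show "i = j"
      using ij n_ge_7 by (simp add: cong_def)
  qed
  then have reindex: "(\<Sum>i\<in>S. c i * f i) = (\<Sum>j<5. c (e j) * f (e j))" for f
    unfolding S_eq by (simp add: sum.reindex)
  have "of_nat (e j) = of_nat y + (of_nat j :: 'a)" for j
    using of_nat_mod_eq[OF of_nat_n, of "y + j"] by (simp add: e_def)
  then have "\<forall>k\<le>3. (\<Sum>j<5. c (e j) * (of_nat y + of_nat j) ^ k) = 0"
    using moments_eq_0 reindex[of "\<lambda>i. of_nat i ^ _"] by simp
  then have binomial: "(\<Sum>j<5. c (e j) * \<omega> ^ j) = c (e 0) * (\<omega> - 1) ^ 4"
    by (rule sum_five_consecutive_weights[OF two_neq_0 three_neq_0])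
  have "\<omega> ^ e j = \<omega> ^ y * \<omega> ^ j" for j
    using power_mod_eq[OF omega_pow_n, of "y + j"] by (simp add: e_def power_add)
  then have "\<omega> ^ y * (\<Sum>j<5. c (e j) * \<omega> ^ j) = 0"
    using root_sums_eq_0[of 1] reindex[of "\<lambda>i. \<omega> ^ i"]
    by (simp add: sum_distrib_left algebra_simps)
  then have "c (e 0) = 0"
    using binomial omega_neq_0 omega_neq_1 by simp
  moreover have "e 0 \<in> S"
    using S_eq by simp
  ultimately show False
    using weights_nonzero by blast
qed

text \<open>The residue fibres of s and s + 1 have at least two elements each, so they exhaust S;
  t lies in the fibre of s, since otherwise t + 1 would have residue s + 2.\<close>

lemma two_adjacent_pairs_shape:
  assumes "card S = 4" "s \<in> S" "t \<in> S" "s \<noteq> t" "Suc s mod n \<in> S" "Suc t mod n \<in> S"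
  shows "of_nat t = (of_nat s :: 'a)" and "S = {s, t, Suc s mod n, Suc t mod n}"
proof -
  define F where "F r = {i \<in> S. of_nat i = r}" for r :: 'a
  have fibre_ge_2: "2 \<le> card (F (of_nat j))" if j: "j \<in> S" for j
  proof -
    obtain j' where "j' \<in> S" "j' \<noteq> j" "of_nat j' = (of_nat j :: 'a)"
      using partner_if_card_le_4[OF _ j] assms(1) by auto
    then have "{j, j'} \<subseteq> F (of_nat j)" "card {j, j'} = 2"
      using j by (auto simp: F_def)
    then show ?thesis
      using finite_S card_mono[of "F (of_nat j)" "{j, j'}"] by (simp add: F_def)
  qed
  let ?u = "of_nat s :: 'a"
  have "2 \<le> card (F ?u)" "2 \<le> card (F (?u + 1))"
    using fibre_ge_2[OF assms(2)] fibre_ge_2[OF assms(5)] by (simp_all add: of_nat_Suc_mod)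
  moreover have "F ?u \<inter> F (?u + 1) = {}" "F ?u \<union> F (?u + 1) \<subseteq> S"
    by (auto simp: F_def)
  moreover have "finite (F r)" for r
    using finite_S by (simp add: F_def)
  ultimately have "F ?u \<union> F (?u + 1) = S"
    using finite_S assms(1) by (intro card_seteq) (simp_all add: card_Un_disjoint)
  then have two_values: "of_nat i = ?u \<or> of_nat i = ?u + 1" if "i \<in> S" for i
    using that by (auto simp: F_def)
  show t: "of_nat t = ?u"
  proof (rule ccontr)
    assume "of_nat t \<noteq> ?u"
    then have "of_nat (Suc t mod n) = ?u + 1 + 1"
      using two_values[OF assms(3)] by (simp add: of_nat_Suc_mod)
    moreover have "(2::'a) \<noteq> 1"
      by (metis one_add_one add_cancel_right_right one_neq_zero)
    ultimately show False
      using two_values[OF assms(6)] two_neq_0 by (auto simp: add.assoc)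
  qed
  have "Suc s mod n \<noteq> Suc t mod n"
    using inj_on_Suc_mod assms(2-4) S_subset by (auto dest: inj_onD)
  moreover have shift_ne: "Suc i mod n \<noteq> j" if "of_nat i = ?u" "of_nat j = ?u" for i j
    using that by (auto simp: of_nat_Suc_mod)
  then have "s \<noteq> Suc s mod n" "s \<noteq> Suc t mod n" "t \<noteq> Suc s mod n" "t \<noteq> Suc t mod n"
    using t by metis+
  ultimately have "card {s, t, Suc s mod n, Suc t mod n} = 4"
    using assms(4) by simp
  moreover have "{s, t, Suc s mod n, Suc t mod n} \<subseteq> S"
    using assms by auto
  ultimately show "S = {s, t, Suc s mod n, Suc t mod n}"
    using finite_S assms(1) by (metis card_subset_eq)
qed

lemma no_two_adjacent_pairs:
  assumes "card S = 4" "s \<in> S" "t \<in> S" "s \<noteq> t" "Suc s mod n \<in> S" "Suc t mod n \<in> S"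
  shows False
proof -
  let ?s' = "Suc s mod n" and ?t' = "Suc t mod n"
  note t = two_adjacent_pairs_shape(1)[OF assms] and S_eq = two_adjacent_pairs_shape(2)[OF assms]
  have of_nat_shift: "of_nat ?s' = of_nat s + (1::'a)" "of_nat ?t' = of_nat s + (1::'a)"
    using t by (simp_all add: of_nat_Suc_mod)
  then have distinct: "s \<noteq> ?s'" "s \<noteq> ?t'" "t \<noteq> ?s'" "t \<noteq> ?t'" "?s' \<noteq> ?t'"
    using t assms(4) S_eq assms(1) by (auto simp: card_insert_if split: if_splits)
  have sum_S: "(\<Sum>i\<in>S. f i) = f s + f t + f ?s' + f ?t'" for f :: "nat \<Rightarrow> 'a"
    unfolding S_eq using distinct assms(4) by (simp add: add.assoc)
  have fibre_sum: "(\<Sum>i\<in>{i \<in> S. of_nat i = r}. c i) = 0" for r :: 'a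
    using sum_fibre_eq_0_if_power_sums_eq_0[OF finite_S, of 3 c of_nat r]
      card_image_le[OF finite_S, of "of_nat :: nat \<Rightarrow> 'a"] moments_eq_0 assms(1) by simp
  have "{i \<in> S. of_nat i = (of_nat s :: 'a)} = {s, t}"
    using S_eq t of_nat_shift by auto
  then have ct: "c t = - c s"
    using fibre_sum[of "of_nat s"] assms(4) by (simp add: eq_neg_iff_add_eq_0 add.commute)
  have "{i \<in> S. of_nat i = (of_nat s + 1 :: 'a)} = {?s', ?t'}"
    using S_eq t of_nat_shift by auto
  then have ct': "c ?t' = - c ?s'"
    using fibre_sum[of "of_nat s + 1"] distinct(5) by (simp add: eq_neg_iff_add_eq_0 add.commute)
  have root: "c s + \<omega> ^ k * c ?s' = 0" if k: "k \<in> {1, 2}" for k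
  proof -
    have "(\<omega> ^ k) ^ s \<noteq> (\<omega> ^ k) ^ t"
      using inj_on_residues[OF k] assms(2-4) S_subset t by (auto dest: inj_onD)
    moreover have "(c s + \<omega> ^ k * c ?s') * ((\<omega> ^ k) ^ s - (\<omega> ^ k) ^ t) = 0"
      using root_sums_eq_0[OF k] unfolding sum_S omega_power_Suc_mod ct ct'
      by (simp add: algebra_simps)
    ultimately show ?thesis
      by simp
  qed
  have "(\<omega> - \<omega> ^ 2) * c ?s' = (c s + \<omega> ^ 1 * c ?s') - (c s + \<omega> ^ 2 * c ?s')"
    by (simp add: algebra_simps)
  then have "c ?s' = 0"
    using root[of 1] root[of 2] omega_neq_omega_square by simp
  then show False
    using weights_nonzero assms(5) by blast
qed

end

context separating_root_of_unity
begin

lemma codeword_vanishing_weights: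
  assumes "generator dvd d" "degree d < n"
  shows "vanishing_weights n \<omega> (coeff d) (coeff_support d)"
proof
  show "coeff_support d \<subseteq> {..<n}"
    using assms(2) by (rule coeff_support_subset)
  show "i \<in> coeff_support d \<Longrightarrow> coeff d i \<noteq> 0" for i
    by (simp add: coeff_support_def)
  have d: "[:-1, 1:] ^ 4 dvd d" "poly d \<omega> = 0" "poly d (\<omega> ^ 2) = 0"
    using assms(1) generator_dvd_iff by auto
  show "(\<Sum>i\<in>coeff_support d. coeff d i * of_nat i ^ k) = 0" if "k \<le> 3" for k
  proof -
    have "[:-1, 1:] ^ Suc k dvd ([:-1, 1:] ^ 4 :: 'a poly)"
      by (rule le_imp_power_dvd) (use that in simp)
    then have "[:-1, 1:] ^ Suc k dvd d"
      using d(1) by (rule dvd_trans)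
    then show ?thesis
      using power_moment_eq_0[OF _ assms(2)] sum_lessThan_eq_sum_coeff_support[OF assms(2)] by metis
  qed
  show "(\<Sum>i\<in>coeff_support d. coeff d i * (\<omega> ^ k) ^ i) = 0" if "k \<in> {1, 2}" for k
    using that d(2,3) poly_eq_sum_lessThan[OF assms(2)] sum_lessThan_eq_sum_coeff_support[OF assms(2)]
    by auto
qed

lemma card_pair_support_ge_7:
  assumes "generator dvd d" "d \<noteq> 0" "degree d < n"
  shows "7 \<le> card (pair_support n d)"
proof (rule ccontr)
  assume "\<not> 7 \<le> card (pair_support n d)"
  define S where "S = coeff_support d"
  define E where "E = {i \<in> S. Suc i mod n \<in> S}"
  interpret vanishing_weights n \<omega> "coeff d" S
    unfolding S_def using assms(1,3) by (rule codeword_vanishing_weights)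
  have weight: "2 * card S - card E \<le> 6"
    using card_pair_support[OF assms(3)] \<open>\<not> 7 \<le> card (pair_support n d)\<close>
    by (simp add: S_def E_def)
  have "E \<subseteq> S" "finite E"
    using finite_S by (auto simp: E_def)
  have "degree d \<in> S"
    using assms(2) by (simp add: S_def coeff_support_def)
  then have "4 \<le> card S"
    using card_ge_4 by blast
  then consider "card S = 4" | "card S = 5" | "6 \<le> card S"
    by linarith
  then show False
  proof cases
    case 1
    then have "\<not> card E \<le> Suc 0"
      using weight by simp
    then obtain s t where "s \<in> E" "t \<in> E" "s \<noteq> t"
      using card_le_Suc0_iff_eq[OF \<open>finite E\<close>] by blast
    then show False
      using no_two_adjacent_pairs[OF 1] unfolding E_def by blast
  next
    case 2
    then have "card S < n" "card S \<le> Suc (card E)"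
      using weight n_ge_7 by simp_all
    then obtain y where "S = (\<lambda>j. (y + j) mod n) ` {..<card S}"
      using cyclic_run_if_adjacent_pairs[OF S_subset] unfolding E_def by blast
    then show False
      using not_run_of_5 2 by simp
  next
    case 3
    then have "E = S"
      using weight card_mono[OF finite_S \<open>E \<subseteq> S\<close>] \<open>finite E\<close> \<open>E \<subseteq> S\<close>
      by (intro card_subset_eq) (use finite_S in auto)
    then have "S = {..<n}"
      using Suc_mod_closed_eq_lessThan[OF S_subset \<open>degree d \<in> S\<close>] unfolding E_def by blast
    then show False
      using weight \<open>E = S\<close> n_ge_7 by simp
  qed
qed

end

lemma odd_divisor_of_pred_prime:
  fixes p l :: nat
  assumes "prime p" "odd p" "odd l" "3 \<le> l" "l dvd p - 1"
  shows "7 \<le> p" and "coprime l p"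
proof -
  have "2 * l dvd p - 1"
    using assms(2,3,5) by (simp add: divides_mult)
  then have le: "2 * l \<le> p - 1"
    using prime_gt_1_nat[OF assms(1)] by (intro dvd_imp_le) auto
  then show "7 \<le> p"
    using assms(4) by simp
  have "\<not> p dvd l"
    using le assms(4) by (auto dest: dvd_imp_le)
  then show "coprime l p"
    using prime_imp_coprime[OF assms(1)] by (simp add: coprime_commute)
qed

lemma separating_root_of_unity_primitive:
  fixes \<omega> :: "'a::field"
  assumes "CHAR('a) = p" "7 \<le> p" "odd l" "3 \<le> l" "coprime l p"
    and "primitive_root_of_unity l \<omega>"
  shows "separating_root_of_unity (l * p) \<omega>"
proof
  show "7 \<le> l * p"
    using assms(2,4) mult_le_mono[of 1 l 7 p] by simp
  show "of_nat (l * p) = (0::'a)"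
    using of_nat_CHAR[where 'a='a] assms(1) by simp
  have "of_nat k \<noteq> (0::'a)" if "0 < k" "k < p" for k
    using assms(1) that by (simp add: of_nat_eq_0_iff_char_dvd nat_dvd_not_less)
  then show "(2::'a) \<noteq> 0" "(3::'a) \<noteq> 0"
    using assms(2) by (metis of_nat_numeral zero_less_numeral numeral_less_iff
      semiring_norm less_le_trans)+
  show "\<omega> ^ (l * p) = 1"
    using assms(6) by (simp add: primitive_root_of_unity_def power_mult)
  show "\<omega> ^ 2 \<noteq> 1"
    using assms(4,6) by (simp add: primitive_root_of_unity_def)
  show "inj_on (\<lambda>i. (of_nat i :: 'a, (\<omega> ^ k) ^ i)) {..<l * p}" if "k \<in> {1, 2}" for k
  proof -
    have "coprime k l"
      using that assms(3) by auto
    then show ?thesis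
      using assms(1,5,6) by (intro inj_on_of_nat_power primitive_root_of_unity_power)
  qed
qed

section \<open>Cyclic codes\<close>

lemma cyclic_code_eq:
  fixes g :: "'a::field poly"
  assumes "g dvd monom 1 n - 1" "0 < n"
  shows "cyclic_code n g = {c. degree c < n \<and> g dvd c}"
proof -
  define M where "M = (monom 1 n - 1 :: 'a poly)"
  have "degree (monom 1 n + (-1) :: 'a poly) = n"
    using assms(2) by (subst degree_add_eq_left) (auto simp: degree_monom_eq)
  then have deg_M: "degree M = n"
    by (simp add: M_def)
  then have M: "M \<noteq> 0"
    using assms(2) by auto
  show ?thesis
  proof (intro equalityI subsetI)
    fix c assume "c \<in> cyclic_code n g"
    then obtain q where c: "c = (q * g) mod M"
      by (auto simp: cyclic_code_def M_def)
    then have "degree c < n"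
      using degree_mod_less[OF M, of "q * g"] deg_M assms(2) by auto
    moreover have "g dvd c"
      unfolding c using assms(1) by (simp add: M_def dvd_mod_iff)
    ultimately show "c \<in> {c. degree c < n \<and> g dvd c}"
      by simp
  next
    fix c assume c: "c \<in> {c. degree c < n \<and> g dvd c}"
    then obtain q where "c = q * g"
      by (metis dvdE mem_Collect_eq mult.commute)
    moreover have "degree c < n"
      using c by simp
    ultimately have "c = (q * g) mod M"
      using deg_M by (simp add: mod_poly_less)
    then show "c \<in> cyclic_code n g"
      by (auto simp: cyclic_code_def M_def)
  qed
qed

lemma card_degree_less:
  assumes "0 < m"
  shows "card {q :: 'a::{zero,finite} poly. degree q < m} = card (UNIV :: 'a set) ^ m"
proof -
  let ?L = "{xs :: 'a list. set xs \<subseteq> UNIV \<and> length xs = m}"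
  have inj: "inj_on Poly ?L"
  proof (rule inj_onI)
    fix xs ys assume "xs \<in> ?L" "ys \<in> ?L" "Poly xs = Poly ys"
    then show "xs = ys"
      by (metis (mono_tags, lifting) coeff_Poly_eq mem_Collect_eq nth_default_nth nth_equalityI)
  qed
  have image: "Poly ` ?L = {q. degree q < m}"
  proof (intro equalityI subsetI)
    fix q assume "q \<in> Poly ` ?L"
    then obtain xs where xs: "length xs = m" "q = Poly xs"
      by blast
    have "coeff q i = 0" if "m - 1 < i" for i
      using that assms xs by (simp add: nth_default_beyond)
    then have "degree q \<le> m - 1"
      by (simp add: degree_le)
    then show "q \<in> {q. degree q < m}"
      using assms by simp
  next
    fix q :: "'a poly" assume "q \<in> {q. degree q < m}"
    then have "length (coeffs q) \<le> m"
      by (cases "q = 0") (auto simp: length_coeffs)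
    then have "coeffs q @ replicate (m - length (coeffs q)) 0 \<in> ?L"
      by simp
    then show "q \<in> Poly ` ?L"
      by (rule rev_image_eqI) simp
  qed
  have "card {q :: 'a poly. degree q < m} = card ?L"
    unfolding image[symmetric] by (rule card_image[OF inj])
  also have "\<dots> = card (UNIV :: 'a set) ^ m"
    by (rule card_lists_length_eq) simp
  finally show ?thesis .
qed

lemma card_cyclic_code:
  fixes g :: "'a::{field,finite} poly"
  assumes "g dvd monom 1 n - 1" "degree g < n"
  shows "card (cyclic_code n g) = card (UNIV :: 'a set) ^ (n - degree g)"
proof -
  have n: "0 < n"
    using assms(2) by simp
  have "g \<noteq> 0"
    using assms(1) n by (auto simp: monom_eq_1_iff)
  have "cyclic_code n g = (\<lambda>q. q * g) ` {q. degree q < n - degree g}"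
  proof (intro equalityI subsetI)
    fix c assume "c \<in> cyclic_code n g"
    then have "degree c < n" "g dvd c"
      using cyclic_code_eq[OF assms(1) n] by auto
    then obtain q where c: "degree c < n" "c = q * g"
      by (metis dvdE mult.commute)
    then have "degree q < n - degree g"
      using \<open>g \<noteq> 0\<close> assms(2) by (cases "q = 0") (auto simp: degree_mult_eq)
    then show "c \<in> (\<lambda>q. q * g) ` {q. degree q < n - degree g}"
      using c by blast
  next
    fix c assume "c \<in> (\<lambda>q. q * g) ` {q. degree q < n - degree g}"
    then obtain q where c: "c = q * g" "degree q < n - degree g"
      by blast
    then have "degree c < n"
      using \<open>g \<noteq> 0\<close> assms(2) by (cases "q = 0") (auto simp: degree_mult_eq)
    then show "c \<in> cyclic_code n g"
      using cyclic_code_eq[OF assms(1) n] c by simp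
  qed
  moreover have "inj_on (\<lambda>q. q * g) {q. degree q < n - degree g}"
    using \<open>g \<noteq> 0\<close> by (auto intro: inj_onI)
  ultimately show ?thesis
    using card_degree_less[of "n - degree g"] assms(2) by (simp add: card_image)
qed

lemma min_pair_dist_eqI:
  fixes C :: "'a::ab_group_add poly set"
  assumes "finite C" "0 \<in> C" "\<And>x y. x \<in> C \<Longrightarrow> y \<in> C \<Longrightarrow> x - y \<in> C"
    and lower: "\<And>c. c \<in> C \<Longrightarrow> c \<noteq> 0 \<Longrightarrow> d \<le> card (pair_support n c)"
    and witness: "c \<in> C" "c \<noteq> 0" "card (pair_support n c) \<le> d"
  shows "min_pair_dist n C = d"
  unfolding min_pair_dist_def
proof (rule Min_eqI)
  have "{pair_dist n x y |x y. x \<in> C \<and> y \<in> C \<and> x \<noteq> y} \<subseteq> (\<lambda>(x, y). pair_dist n x y) ` (C \<times> C)"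
    by auto
  then show "finite {pair_dist n x y |x y. x \<in> C \<and> y \<in> C \<and> x \<noteq> y}"
    using assms(1) finite_subset by blast
  show "d \<le> e" if "e \<in> {pair_dist n x y |x y. x \<in> C \<and> y \<in> C \<and> x \<noteq> y}" for e
    using that assms(3) lower by (auto simp: pair_dist_eq_card_pair_support)
  have "pair_dist n c 0 = d"
    using lower[OF witness(1,2)] witness(3) by (simp add: pair_dist_eq_card_pair_support)
  then show "d \<in> {pair_dist n x y |x y. x \<in> C \<and> y \<in> C \<and> x \<noteq> y}"
    using witness(1,2) assms(2) by force
qed

lemma AMDS_pair_code_cyclic_code:
  fixes g :: "'a::{field,finite} poly"
  assumes "g dvd monom 1 n - 1" "degree g < n" "degree g + 1 = d"
    and lower: "\<And>c. c \<in> cyclic_code n g \<Longrightarrow> c \<noteq> 0 \<Longrightarrow> d \<le> card (pair_support n c)"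
    and witness: "c \<in> cyclic_code n g" "c \<noteq> 0" "card (pair_support n c) \<le> d"
  shows "AMDS_pair_code n (cyclic_code n g) d"
proof -
  have C: "cyclic_code n g = {c. degree c < n \<and> g dvd c}"
    using assms(1,2) by (intro cyclic_code_eq) auto
  have "n - degree g = n - d + 1"
    using assms(2,3) by linarith
  then have card: "card (cyclic_code n g) = card (UNIV :: 'a set) ^ (n - d + 1)"
    using card_cyclic_code[OF assms(1,2)] by simp
  then have "finite (cyclic_code n g)"
    by (intro card_ge_0_finite) (simp add: finite_UNIV_card_ge_0)
  moreover have "x - y \<in> cyclic_code n g" if "x \<in> cyclic_code n g" "y \<in> cyclic_code n g" for x y
    using that unfolding C by (auto intro: degree_diff_less)
  ultimately have "min_pair_dist n (cyclic_code n g) = d"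
    using lower witness by (intro min_pair_dist_eqI) (auto simp: C)
  then show ?thesis
    using card by (simp add: AMDS_pair_code_def)
qed

section \<open>A codeword of pair weight seven\<close>

lemma binomial_product_pair_support:
  fixes a b n :: nat
  assumes "a + b + 1 = n" "0 < a" "0 < b"
  defines "c \<equiv> (monom 1 a - 1) * (monom 1 b - 1) :: 'a::comm_ring_1 poly"
  shows "coeff c 0 = 1" and "degree c < n" and "card (pair_support n c) \<le> 7"
proof -
  have "n - 1 = a + b"
    using assms(1) by simp
  then have "c = monom 1 (n - 1) - monom 1 a - monom 1 b + 1"
    by (simp add: c_def algebra_simps mult_monom)
  then have coeff_c: "coeff c i = (if i = n - 1 then 1 else 0) - (if i = a then 1 else 0)
      - (if i = b then 1 else 0) + (if i = 0 then 1 else 0)" for i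
    by (simp add: coeff_monom)
  have distinct: "n - 1 \<noteq> a" "n - 1 \<noteq> b" "n - 1 \<noteq> 0" "a \<noteq> 0" "b \<noteq> 0"
    using assms(1-3) by linarith+
  then have cn: "coeff c (n - 1) = 1"
    using coeff_c[of "n - 1"] by simp
  show c0: "coeff c 0 = 1"
    using distinct coeff_c[of 0] by simp
  have vanish: "coeff c i = 0" if "i \<notin> {0, a, b, n - 1}" for i
    using that coeff_c[of i] by simp
  then have S: "coeff_support c \<subseteq> {0, a, b, n - 1}"
    by (auto simp: coeff_support_def)
  have "degree c \<le> n - 1"
  proof (rule degree_le, intro allI impI)
    fix i assume "n - 1 < i"
    then have "i \<notin> {0, a, b, n - 1}"
      using assms(1) by auto
    then show "coeff c i = 0"
      by (rule vanish)
  qed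
  then show deg: "degree c < n"
    using assms(1) by linarith
  have "card (coeff_support c) \<le> card (set [0, a, b, n - 1])"
    using S by (intro card_mono) auto
  also have "\<dots> \<le> 4"
    using card_length[of "[0, a, b, n - 1]"] by simp
  finally have "card (coeff_support c) \<le> 4" .
  moreover have "n - 1 \<in> {i \<in> coeff_support c. Suc i mod n \<in> coeff_support c}"
    using c0 cn assms(1) by (auto simp: coeff_support_def)
  then have "0 < card {i \<in> coeff_support c. Suc i mod n \<in> coeff_support c}"
    using finite_subset[OF coeff_support_subset[OF deg]] by (subst card_gt_0_iff) auto
  ultimately show "card (pair_support n c) \<le> 7"
    using card_pair_support[OF deg] by linarith
qed

lemma split_pred_mult_into_multiples:
  fixes l p :: nat
  assumes "coprime l p" "1 < p" "1 < l"
  obtains a b where "a + b + 1 = l * p" "p dvd a" "l dvd b" "0 < a" "0 < b"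
proof -
  obtain x where x: "[l * x = 1] (mod p)"
    using cong_solve_coprime_nat[OF assms(1)] by auto
  define k where "k = x * (p - 1) mod p"
  have "[l * k + 1 = l * x * (p - 1) + 1] (mod p)"
    unfolding k_def cong_def by (metis mod_add_left_eq mod_mult_right_eq mult.assoc)
  also have "[l * x * (p - 1) + 1 = 1 * (p - 1) + 1] (mod p)"
    using x by (intro cong_add cong_mult cong_refl)
  also have "1 * (p - 1) + 1 = p"
    using assms(2) by simp
  finally have dvd: "p dvd l * k + 1"
    by (simp add: cong_def dvd_eq_mod_eq_0)
  have "k < p"
    using assms(2) by (simp add: k_def)
  then have "l * k + l \<le> l * p"
    by (metis Suc_leI add.commute mult_Suc_right mult_le_mono2)
  define b where "b = l * k"
  define a where "a = l * p - 1 - b"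
  have sum: "a + b + 1 = l * p"
    using \<open>l * k + l \<le> l * p\<close> assms(3) by (simp add: a_def b_def)
  moreover have "p dvd a"
    using sum dvd by (metis add.assoc b_def dvd_add_left_iff dvd_triv_right)
  moreover have "0 < a"
    using \<open>l * k + l \<le> l * p\<close> assms(3) by (simp add: a_def b_def)
  moreover have "0 < b"
    using dvd assms(2,3) by (cases "k = 0") (auto simp: b_def)
  ultimately show ?thesis
    using that by (simp add: b_def)
qed

lemma binomial_product_codeword:
  fixes l :: nat
  assumes "prime CHAR('a)" "4 \<le> CHAR('a)" "coprime l CHAR('a)" "1 < l"
  obtains c :: "'a::field poly" where "c \<noteq> 0" "degree c < l * CHAR('a)" "[:-1, 1:] ^ 4 dvd c"
    "\<And>z. z ^ l = 1 \<Longrightarrow> poly c z = 0" "card (pair_support (l * CHAR('a)) c) \<le> 7"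
proof -
  obtain a b where ab: "a + b + 1 = l * CHAR('a)" "CHAR('a) dvd a" "l dvd b" "0 < a" "0 < b"
    using split_pred_mult_into_multiples[OF assms(3) _ assms(4)] prime_gt_1_nat[OF assms(1)]
    by blast
  define c where "c = (monom 1 a - 1) * (monom 1 b - 1 :: 'a poly)"
  have "coeff c 0 = 1" "degree c < l * CHAR('a)" "card (pair_support (l * CHAR('a)) c) \<le> 7"
    using binomial_product_pair_support[OF ab(1,4,5)] by (simp_all add: c_def)
  moreover have "[:-1, 1:] ^ 4 dvd c"
  proof -
    have "[:-1, 1:] ^ 4 dvd ([:-1, 1:] ^ CHAR('a) :: 'a poly)"
      using assms(2) by (rule le_imp_power_dvd)
    also have "\<dots> dvd monom 1 a - 1"
      by (rule linear_power_CHAR_dvd_monom_minus_1[OF assms(1) ab(2)])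
    finally show ?thesis
      unfolding c_def by (rule dvd_mult2)
  qed
  moreover have "poly c z = 0" if "z ^ l = 1" for z
  proof -
    obtain m where "b = l * m"
      using ab(3) by blast
    then have "z ^ b = 1"
      using \<open>z ^ l = 1\<close> by (simp add: power_mult)
    then show ?thesis
      by (simp add: c_def poly_monom)
  qed
  ultimately show ?thesis
    by (intro that[of c]) auto
qed

theorem theorem3p11:
  fixes p l :: nat and \<omega> :: "'a::{field,finite}"
  assumes "prime p" and "odd p" and "card (UNIV :: 'a set) = p"
    and "odd l" and "l \<ge> 3" and "l dvd p - 1"
    and "primitive_root_of_unity l \<omega>"
  shows "AMDS_pair_code (l * p)
           (cyclic_code (l * p) ([:-1, 1:] ^ 4 * [:-\<omega>, 1:] * [:-(\<omega> ^ 2), 1:])) 7"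
proof -
  have char: "CHAR('a) = p"
    using CHAR_eq_prime_card[where 'a='a] assms(1,3) by simp
  note p = odd_divisor_of_pred_prime[OF assms(1,2,4,5,6)]
  interpret separating_root_of_unity "l * p" \<omega>
    by (rule separating_root_of_unity_primitive[OF char p(1) assms(4,5) p(2) assms(7)])
  obtain c :: "'a poly" where c: "c \<noteq> 0" "degree c < l * p" "[:-1, 1:] ^ 4 dvd c"
    "\<And>z. z ^ l = 1 \<Longrightarrow> poly c z = 0" "card (pair_support (l * p) c) \<le> 7"
    using binomial_product_codeword[where 'a='a, of l] char assms(1,5) p by auto
  have code: "generator dvd monom 1 (l * p) - 1"
    using generator_dvd_monom_minus_1 char assms(1) p(1) by simp
  have "\<omega> ^ l = 1"
    using assms(7) by (simp add: primitive_root_of_unity_def)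
  then have "generator dvd c"
    using c(3,4) by (simp add: generator_dvd_iff) (metis power_mult mult.commute power_one)
  moreover have "cyclic_code (l * p) generator = {c. degree c < l * p \<and> generator dvd c}"
    using code n_ge_7 by (intro cyclic_code_eq) linarith+
  ultimately show ?thesis
    unfolding generator_def[symmetric]
    using code degree_generator n_ge_7 c card_pair_support_ge_7
    by (intro AMDS_pair_code_cyclic_code[where c = c]) auto
qed

end
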